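(* Let $R$ be a semistandard cylindric tableau and $S$ a set of boxes satisfying the input conditions of full multi-insertion, and let $G$ and $H$ be two bumping routes created when $\operatorname{FullMulti}(R,S)$ is performed, with $G_1<H_1$ (the first points, compared in the order $\le$ on points). Then for every plane row $r$ such that both $G(r)$ and $H(r)$ are defined, $H(r)$ is strictly to the left of $G(r)$, and the event that extended $G$ to include $G(r)$ occurred after the event that extended $H$ to include $H(r)$.
   Context: Fix integers $n>k\ge1$. A cylindric partition is a weakly decreasing integer sequence $(\lambda_m)_{m\in\mathbb Z}$ with $\lambda_m=\lambda_{m+k}+n-k$. A point $(x,y)\in\mathbb Z^2$ is in plane row $x$ and plane column $y$ and lies in $\lambda$ if $y\le\lambda_x$; a point $(x,y)$ is strictly left of $(x,y')$ if $y<y'$. Total order on points: $(x_1,y_1)\le(x_2,y_2)$ iff $x_1<x_2$, or $x_1=x_2$ and $y_1\ge y_2$. Boxes are classes of points modulo translation by multiples of $(-k,n-k)$; $\pi$ is the projection; row $x$ of the cylinder is the image of plane row $x$ (indexed mod $k$), column $y$ the image of plane column $y$; for a box $B$ in row $\pi(s)$, $\pi^{-1}_s(B)$ is its representative in plane row $s$. Within a row, boxes are ordered left to right by $y$-coordinates of representatives in a fixed plane row. $\mu\subseteq\lambda$ means $\mu_m\le\lambda_m$ for all $m$. A (semistandard cylindric) tableau of shape $\lambda/\mu$ is a map from the boxes in $\lambda$ but not $\mu$ to a totally ordered alphabet, weakly increasing along plane rows and strictly increasing down plane columns; its shapes are part of its data. Full multi-insertion $\operatorname{FullMulti}(R,S)$: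 input a tableau $R$ with outer shape $\lambda$, inner shape $\mu$, and a set $S$ of boxes not in $\mu$, no two in the same column, such that $\mu$ plus $S$ is a cylindric partition. Choose an integer $r_0$. For $h=r_0,\dots,r_0+k-1$, go through the boxes of $S$ in row $h$ from left to right: if the box is in $\lambda$, remove its entry $x$ and append $(x,h+1)$ to a queue $q_0$; otherwise add the box to $\lambda$. All boxes of $S$ are added to the inner shape. Then, while the current queue $q$ is nonempty: start an empty queue $q'$; remove pairs $(x,s)$ from the front of $q$ one at a time; if $x$ is $\ge$ every entry in row $s$, put $x$ into the leftmost box of row $s$ not in the current outer shape and add it to the outer shape; otherwise replace the leftmost entry $x'$ of row $s$ greater than $x$ by $x$ and append $(x',s+1)$ to $q'$; when $q$ is exhausted set $q:=q'$. These actions happen one after another and thus are totally ordered in time. Bumping route of a point $P$ with $\pi(P)\in S$ in plane row $s_0$: a list of points starting with $P$ (added at the moment $\pi(P)$ is processed in the removal phase). If $\pi(P)$ was in $\lambda$, the pair created from its entry is tracked; whenever the tracked pair is processed and its letter is placed into a box $B$, the point $\pi^{-1}_s(B)$ is appended (this placement is the event extending the route), where $s$ is one more than the plane row of the previously appended point; if an entry $x'$ was displaced, the new pair $(x',\cdot)$ becomes tracked. For a route $H$, $H_1$ is its first point and $H(r)$ is its point in plane row $r$, if any. *)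

theory Defs
  imports Main
begin

type_synonym pt = "int \<times> int"
type_synonym box = "(int \<times> int) set"

definition shift :: "nat \<Rightarrow> nat \<Rightarrow> int \<Rightarrow> pt \<Rightarrow> pt" where
  "shift n k j p = (fst p - j * int k, snd p + j * (int n - int k))"

definition proj :: "nat \<Rightarrow> nat \<Rightarrow> pt \<Rightarrow> box" where
  "proj n k p = {shift n k j p | j. True}"

definition cyl :: "nat \<Rightarrow> nat \<Rightarrow> (int \<Rightarrow> int) \<Rightarrow> bool" where
  "cyl n k lam \<longleftrightarrow> (\<forall>m. lam (m + 1) \<le> lam m) \<and> (\<forall>m. lam m = lam (m + int k) + (int n - int k))"

definition pt_in :: "(int \<Rightarrow> int) \<Rightarrow> pt \<Rightarrow> bool" where
  "pt_in lam p \<longleftrightarrow> snd p \<le> lam (fst p)"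

definition box_in :: "(int \<Rightarrow> int) \<Rightarrow> box \<Rightarrow> bool" where
  "box_in lam B \<longleftrightarrow> (\<exists>p\<in>B. pt_in lam p)"

definition in_col :: "box \<Rightarrow> int \<Rightarrow> bool" where
  "in_col B y \<longleftrightarrow> (\<exists>p\<in>B. snd p = y)"

definition pt_less :: "pt \<Rightarrow> pt \<Rightarrow> bool" where
  "pt_less p q \<longleftrightarrow> (fst p < fst q \<or> (fst p = fst q \<and> snd p \<ge> snd q)) \<and> p \<noteq> q"

definition in_skew :: "(int \<Rightarrow> int) \<Rightarrow> (int \<Rightarrow> int) \<Rightarrow> pt \<Rightarrow> bool" where
  "in_skew lam mu p \<longleftrightarrow> pt_in lam p \<and> \<not> pt_in mu p"

text \<open>Semistandard cylindric tableau of shape lam/mu; entries are given by a map on boxes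
  (values outside lam/mu are irrelevant).\<close>
definition ssyt :: "nat \<Rightarrow> nat \<Rightarrow> (int \<Rightarrow> int) \<Rightarrow> (int \<Rightarrow> int) \<Rightarrow> (box \<Rightarrow> 'a::linorder) \<Rightarrow> bool" where
  "ssyt n k lam mu T \<longleftrightarrow> cyl n k lam \<and> cyl n k mu \<and> (\<forall>m. mu m \<le> lam m) \<and>
     (\<forall>x y. in_skew lam mu (x, y) \<and> in_skew lam mu (x, y + 1) \<longrightarrow>
            T (proj n k (x, y)) \<le> T (proj n k (x, y + 1))) \<and>
     (\<forall>x y. in_skew lam mu (x, y) \<and> in_skew lam mu (x + 1, y) \<longrightarrow>
            T (proj n k (x, y)) < T (proj n k (x + 1, y)))"

definition multi_input :: "nat \<Rightarrow> nat \<Rightarrow> (int \<Rightarrow> int) \<Rightarrow> box set \<Rightarrow> bool" where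
  "multi_input n k mu S \<longleftrightarrow>
     (\<forall>B\<in>S. B \<in> range (proj n k) \<and> \<not> box_in mu B) \<and>
     (\<forall>B1\<in>S. \<forall>B2\<in>S. B1 \<noteq> B2 \<longrightarrow> \<not> (\<exists>y. in_col B1 y \<and> in_col B2 y)) \<and>
     (\<exists>nu. cyl n k nu \<and> (\<forall>p. pt_in nu p \<longleftrightarrow> pt_in mu p \<or> proj n k p \<in> S))"

definition add_box :: "(int \<Rightarrow> int) \<Rightarrow> box \<Rightarrow> (int \<Rightarrow> int)" where
  "add_box lam B = (\<lambda>m. if (\<exists>y. (m, y) \<in> B) then max (lam m) (THE y. (m, y) \<in> B) else lam m)"

text \<open>Queue pairs carry, besides letter and row, a tag: the point (in the plane row of
  the removal phase) of the box of S whose route tracks the pair.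
  The log records every route-extending event in chronological order as (tag, point);
  the position in the log is the time of the event.\<close>
record 'a fm_state =
  st_outer :: "int \<Rightarrow> int"
  st_inner :: "int \<Rightarrow> int"
  st_ent :: "box \<Rightarrow> 'a"
  st_todo :: "pt list"
  st_q :: "('a \<times> int \<times> pt) list"
  st_q' :: "('a \<times> int \<times> pt) list"
  st_log :: "(pt \<times> pt) list"

definition fm_init :: "nat \<Rightarrow> nat \<Rightarrow> (int \<Rightarrow> int) \<Rightarrow> (int \<Rightarrow> int) \<Rightarrow> (box \<Rightarrow> 'a)
    \<Rightarrow> box set \<Rightarrow> int \<Rightarrow> 'a fm_state" where
  "fm_init n k lam mu T S r0 =
    \<lparr> st_outer = lam, st_inner = mu, st_ent = T,
      st_todo = concat (map (\<lambda>h. map (\<lambda>y. (h, y)) (sorted_list_of_set {y. proj n k (h, y) \<in> S}))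
                            [r0..r0 + int k - 1]),
      st_q = [], st_q' = [], st_log = [] \<rparr>"

definition fm_step :: "nat \<Rightarrow> nat \<Rightarrow> 'a::linorder fm_state \<Rightarrow> 'a fm_state" where
  "fm_step n k \<sigma> =
    (case st_todo \<sigma> of
      p # rest \<Rightarrow>
        (let B = proj n k p; h = fst p in
          if snd p \<le> st_outer \<sigma> h then
            \<sigma>\<lparr> st_todo := rest, st_q := st_q \<sigma> @ [(st_ent \<sigma> B, h + 1, p)],
               st_inner := add_box (st_inner \<sigma>) B, st_log := st_log \<sigma> @ [(p, p)] \<rparr>
          else
            \<sigma>\<lparr> st_todo := rest, st_outer := add_box (st_outer \<sigma>) B,
               st_inner := add_box (st_inner \<sigma>) B, st_log := st_log \<sigma> @ [(p, p)] \<rparr>)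
    | [] \<Rightarrow>
      (case st_q \<sigma> of
        (x, s, tag) # rest \<Rightarrow>
          (if (\<forall>y. st_inner \<sigma> s < y \<and> y \<le> st_outer \<sigma> s \<longrightarrow> st_ent \<sigma> (proj n k (s, y)) \<le> x) then
             (let y0 = st_outer \<sigma> s + 1 in
               \<sigma>\<lparr> st_q := rest, st_outer := add_box (st_outer \<sigma>) (proj n k (s, y0)),
                  st_ent := (st_ent \<sigma>)(proj n k (s, y0) := x),
                  st_log := st_log \<sigma> @ [(tag, (s, y0))] \<rparr>)
           else
             (let y0 = (LEAST y. st_inner \<sigma> s < y \<and> y \<le> st_outer \<sigma> s \<and> x < st_ent \<sigma> (proj n k (s, y)));
                  x' = st_ent \<sigma> (proj n k (s, y0)) in
               \<sigma>\<lparr> st_q := rest, st_ent := (st_ent \<sigma>)(proj n k (s, y0) := x),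
                  st_q' := st_q' \<sigma> @ [(x', s + 1, tag)],
                  st_log := st_log \<sigma> @ [(tag, (s, y0))] \<rparr>))
      | [] \<Rightarrow> \<sigma>\<lparr> st_q := st_q' \<sigma>, st_q' := [] \<rparr>))"

text \<open>State after i steps (once the algorithm has finished, steps do nothing).\<close>
definition fm_run :: "nat \<Rightarrow> nat \<Rightarrow> (int \<Rightarrow> int) \<Rightarrow> (int \<Rightarrow> int) \<Rightarrow> (box \<Rightarrow> 'a::linorder)
    \<Rightarrow> box set \<Rightarrow> int \<Rightarrow> nat \<Rightarrow> 'a fm_state" where
  "fm_run n k lam mu T S r0 i = (fm_step n k ^^ i) (fm_init n k lam mu T S r0)"

text \<open>Bumping route of the point P (with proj P in S), read off an event log: the list of
  its points, each paired with the time of the event that appended it. The log stores the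
  route of the representative of the box in the removal-phase plane row; the route of P is
  its translate.\<close>
definition route :: "nat \<Rightarrow> nat \<Rightarrow> (pt \<times> pt) list \<Rightarrow> pt \<Rightarrow> (pt \<times> nat) list" where
  "route n k L P =
    [((fst q + fst P - fst tag, snd q + snd P - snd tag), t).
       (t, tag, q) \<leftarrow> zip [0..<length L] L, proj n k tag = proj n k P]"

end

theory Submission
  imports Defs "HOL-Number_Theory.Cong" "HOL-Library.Product_Lexorder"
begin

text \<open>The theorem is an invariant of the step function. Key every route-extending event by
  the number of rows its letter has descended since its removal, followed by the tag of its route,
  ordered lexicographically. The removal boxes are processed in order of their tags and the queue
  in rounds of constant descent, so events happen in strictly increasing key order. Moreover, in
  each row class an event lands strictly right of every earlier event: a placed letter goes just
  beyond the outer shape, and a bumped letter lies beyond everything reached so far, because every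
  queued letter dominates the entries already reached in its target row. Keeping this last
  property alive is where the semistandard conditions enter, in the form of the remaining
  invariants.

  For routes G and H with G_1 < H_1, the event of H in a plane row has the smaller key, so it
  happened first, and therefore G's event in that row lies strictly to its right.\<close>

lemma mono_on_int_interval:
  fixes g :: "int \<Rightarrow> 'b::order"
  assumes step: "\<And>y. lo < y \<Longrightarrow> y + 1 \<le> hi \<Longrightarrow> g y \<le> g (y + 1)"
  shows "lo < a \<Longrightarrow> a \<le> b \<Longrightarrow> b \<le> hi \<Longrightarrow> g a \<le> g b"
proof (induction "nat (b - a)" arbitrary: b)
  case 0
  then show ?case by simp
next
  case (Suc m)
  then have "g a \<le> g (b - 1)" by simp
  also have "g (b - 1) \<le> g b" using step[of "b - 1"] Suc by simp
  finally show ?case .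
qed

lemma Least_int_bounded:
  fixes P :: "int \<Rightarrow> bool"
  assumes "P y" and bounded: "\<And>y. P y \<Longrightarrow> lo < y \<and> y \<le> hi"
  shows "P (LEAST y. P y)" and "\<And>y. P y \<Longrightarrow> (LEAST y. P y) \<le> y"
proof -
  have fin: "finite {y. P y}" by (rule finite_subset[of _ "{lo<..hi}"]) (use bounded in auto)
  have ne: "{y. P y} \<noteq> {}" using \<open>P y\<close> by blast
  have Min: "P (Min {y. P y})" "\<And>y. P y \<Longrightarrow> Min {y. P y} \<le> y"
    using Min_in[OF fin ne] Min_le[OF fin] by auto
  have "(LEAST y. P y) = Min {y. P y}" by (rule Least_equality) (use Min in auto)
  then show "P (LEAST y. P y)" "\<And>y. P y \<Longrightarrow> (LEAST y. P y) \<le> y" using Min by simp_all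
qed

lemma in_sorted_list_of_set: "y \<in> set (sorted_list_of_set A) \<Longrightarrow> y \<in> A"
  by (cases "finite A") simp_all

lemma sorted_wrt_concat_rows:
  fixes hs :: "'a::linorder list" and f :: "'a \<Rightarrow> 'b::linorder list"
  assumes "sorted_wrt (<) hs" and "\<And>h. sorted_wrt (<) (f h)"
  shows "sorted_wrt (<) (concat (map (\<lambda>h. map (\<lambda>y. (h, y)) (f h)) hs))"
  using assms(1)
proof (induction hs)
  case (Cons h hs)
  have "sorted_wrt (<) (map (\<lambda>y. (h, y)) (f h))" using assms(2)[of h] by (simp add: sorted_wrt_map)
  then show ?case using Cons by (auto simp: sorted_wrt_append)
qed simp

section \<open>Boxes of the cylinder\<close>

locale cylinder =
  fixes n k :: nat
  assumes k_pos: "0 < k"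
begin

abbreviation col_shift :: int where "col_shift \<equiv> int n - int k"

text \<open>The column of the representative of the box of p in plane row s
  (meaningful only for s congruent to the row of p modulo k).\<close>
definition rep_col :: "int \<Rightarrow> pt \<Rightarrow> int" where
  "rep_col s p = snd p + ((fst p - s) div int k) * col_shift"

definition shape_periodic :: "(int \<Rightarrow> int) \<Rightarrow> bool" where
  "shape_periodic f \<longleftrightarrow> (\<forall>m. f (m + int k) = f m - col_shift)"

lemma cong_eq_add_div: "[s = t] (mod int k) \<Longrightarrow> t = s + ((t - s) div int k) * int k"
  by (metis cong_iff_dvd_diff dvd_div_mult_self dvd_minus_iff minus_diff_eq add_diff_cancel_left'
      diff_add_cancel)

lemma cong_add_mult: "[s = s + j * int k] (mod int k)"
  by (simp add: cong_iff_lin mult.commute)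

lemma mem_proj_iff: "(a, b) \<in> proj n k p \<longleftrightarrow> [a = fst p] (mod int k) \<and> b = rep_col a p"
proof
  assume "(a, b) \<in> proj n k p"
  then obtain j where a: "a = fst p - j * int k" and b: "b = snd p + j * col_shift"
    by (auto simp: proj_def shift_def)
  have "[a = fst p] (mod int k)" using a cong_add_mult[of a j] by simp
  moreover have "(fst p - a) div int k = j" using a k_pos by simp
  ultimately show "[a = fst p] (mod int k) \<and> b = rep_col a p" using b by (simp add: rep_col_def)
next
  assume h: "[a = fst p] (mod int k) \<and> b = rep_col a p"
  define j where "j = (fst p - a) div int k"
  have "fst p = a + j * int k" using cong_eq_add_div h j_def by blast
  then have "(a, b) = shift n k j p" using h by (simp add: shift_def rep_col_def j_def)
  then show "(a, b) \<in> proj n k p" by (auto simp: proj_def)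
qed

lemma in_proj_self: "p \<in> proj n k p"
  using mem_proj_iff[of "fst p" "snd p" p] by (simp add: rep_col_def)

lemma proj_eqI:
  assumes "q \<in> proj n k p"
  shows "proj n k q = proj n k p"
proof -
  have shift_shift: "shift n k i (shift n k j p) = shift n k (i + j) p" for i j p
    by (simp add: shift_def algebra_simps)
  obtain j where q: "q = shift n k j p" using assms by (auto simp: proj_def)
  have "shift n k i p = shift n k (i - j) q" for i using q shift_shift by simp
  then show ?thesis using q shift_shift unfolding proj_def by blast
qed

lemma proj_pair_eq_iff: "proj n k (s, y) = proj n k p \<longleftrightarrow> [s = fst p] (mod int k) \<and> y = rep_col s p"
  using in_proj_self mem_proj_iff proj_eqI by metis

lemma rep_col_cong:
  assumes "[s = t] (mod int k)"
  shows "rep_col s p = rep_col t p + ((t - s) div int k) * col_shift"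
proof -
  obtain i where "t = s + i * int k" using cong_eq_add_div[OF assms] by blast
  moreover have "(fst p - s) div int k = (fst p - t) div int k + i"
  proof -
    have "fst p - s = (fst p - t) + i * int k" using calculation by simp
    then show ?thesis using k_pos by (simp only: div_mult_self1)
  qed
  ultimately show ?thesis using k_pos by (simp add: rep_col_def algebra_simps)
qed

lemma add_box_proj:
  "add_box f (proj n k p) m = (if [m = fst p] (mod int k) then max (f m) (rep_col m p) else f m)"
proof -
  have "(THE y. (m, y) \<in> proj n k p) = rep_col m p" if "[m = fst p] (mod int k)"
    by (rule the_equality) (use that in \<open>auto simp: mem_proj_iff\<close>)
  then show ?thesis by (auto simp: add_box_def mem_proj_iff)
qed

lemma shape_periodic_shift:
  assumes "shape_periodic f"
  shows "f (m + j * int k) = f m - j * col_shift"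
proof (induction j rule: int_induct[where k = 0])
  case (step1 i)
  have "f (m + (i + 1) * int k) = f (m + i * int k + int k)" by (simp add: algebra_simps)
  also have "\<dots> = f (m + i * int k) - col_shift" using assms by (simp add: shape_periodic_def)
  finally show ?case using step1 by (simp add: algebra_simps)
next
  case (step2 i)
  have "f (m + i * int k) = f (m + (i - 1) * int k + int k)" by (simp add: algebra_simps)
  also have "\<dots> = f (m + (i - 1) * int k) - col_shift" using assms by (simp add: shape_periodic_def)
  finally show ?case using step2 by (simp add: algebra_simps)
qed simp

lemma shape_periodic_cong:
  "shape_periodic f \<Longrightarrow> [s = t] (mod int k) \<Longrightarrow> f s = f t + ((t - s) div int k) * col_shift"
  using shape_periodic_shift[of f s "(t - s) div int k"] cong_eq_add_div[of s t] by simp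

lemma shape_periodic_add_box:
  assumes "shape_periodic f"
  shows "shape_periodic (add_box f (proj n k p))"
proof -
  have "[m + int k = fst p] (mod int k) \<longleftrightarrow> [m = fst p] (mod int k)" for m
    by (metis cong_add_rcancel cong_add_mult cong_sym cong_trans mult_1)
  moreover have "rep_col (m + int k) p = rep_col m p - col_shift" for m
    using rep_col_cong[of m "m + int k" p] cong_add_mult[of m 1] k_pos by simp
  ultimately show ?thesis
    using assms by (auto simp: shape_periodic_def add_box_proj max_def)
qed

lemma cyl_shape_periodic: "cyl n k f \<Longrightarrow> shape_periodic f"
  by (simp add: cyl_def shape_periodic_def algebra_simps)

end

section \<open>The invariant of full multi-insertion\<close>

text \<open>Keys of a logged event (tag, q), of a queued pair (x, s, tag) and of a pending removal
  at p: rows descended by the tracked letter, then the tag.\<close>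

definition log_key :: "pt \<times> pt \<Rightarrow> int \<times> pt" where
  "log_key e = (fst (snd e) - fst (fst e), fst e)"

definition queue_key :: "'a \<times> int \<times> pt \<Rightarrow> int \<times> pt" where
  "queue_key a = (fst (snd a) - fst (snd (snd a)), snd (snd a))"

definition todo_key :: "pt \<Rightarrow> int \<times> pt" where
  "todo_key p = (0, p)"

abbreviation queued :: "'a fm_state \<Rightarrow> ('a \<times> int \<times> pt) list" where
  "queued \<sigma> \<equiv> st_q \<sigma> @ st_q' \<sigma>"

context cylinder
begin

definition entry :: "'a fm_state \<Rightarrow> int \<Rightarrow> int \<Rightarrow> 'a" where
  "entry \<sigma> s y = st_ent \<sigma> (proj n k (s, y))"

definition reached :: "'a fm_state \<Rightarrow> int \<Rightarrow> int \<Rightarrow> bool" where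
  "reached \<sigma> s y \<longleftrightarrow> y \<le> st_inner \<sigma> s \<or>
     (\<exists>e\<in>set (st_log \<sigma>). [s = fst (snd e)] (mod int k) \<and> y \<le> rep_col s (snd e))"

lemma entry_cong:
  "[s = t] (mod int k) \<Longrightarrow> entry \<sigma> s y = entry \<sigma> t (y - ((t - s) div int k) * col_shift)"
proof -
  assume "[s = t] (mod int k)"
  then have "proj n k (s, y) = proj n k (t, y - ((t - s) div int k) * col_shift)"
    by (simp add: proj_pair_eq_iff rep_col_def)
  then show ?thesis by (simp add: entry_def)
qed

lemma entry_update:
  "st_ent \<sigma>' = (st_ent \<sigma>)(proj n k q := x) \<Longrightarrow>
   entry \<sigma>' s y = (if [s = fst q] (mod int k) \<and> y = rep_col s q then x else entry \<sigma> s y)"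
  by (simp add: entry_def proj_pair_eq_iff)

lemma reached_mono: "reached \<sigma> s y \<Longrightarrow> y' \<le> y \<Longrightarrow> reached \<sigma> s y'"
  unfolding reached_def by force

lemma reached_log_append:
  "st_inner \<sigma>' = st_inner \<sigma> \<Longrightarrow> st_log \<sigma>' = st_log \<sigma> @ [(t, q)] \<Longrightarrow>
   reached \<sigma>' s y \<longleftrightarrow> reached \<sigma> s y \<or> ([s = fst q] (mod int k) \<and> y \<le> rep_col s q)"
  unfolding reached_def by auto

lemma reached_cong:
  assumes "shape_periodic (st_inner \<sigma>)" and "[s = t] (mod int k)"
  shows "reached \<sigma> s y \<longleftrightarrow> reached \<sigma> t (y - ((t - s) div int k) * col_shift)"
proof -
  define d where "d = ((t - s) div int k) * col_shift"
  have "[s = fst q] (mod int k) \<longleftrightarrow> [t = fst q] (mod int k)" for q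
    using assms(2) cong_sym cong_trans by blast
  moreover have "[t = fst q] (mod int k) \<Longrightarrow> rep_col s q = rep_col t q + d" for q
    using rep_col_cong[OF assms(2)] d_def by simp
  moreover have "st_inner \<sigma> s = st_inner \<sigma> t + d"
    using shape_periodic_cong[OF assms] d_def by simp
  ultimately show ?thesis unfolding reached_def d_def[symmetric] by (smt (verit) bex_cong)
qed

end

locale full_multi = cylinder +
  fixes r0 :: int
begin

definition in_window :: "pt \<Rightarrow> bool" where
  "in_window p \<longleftrightarrow> r0 \<le> fst p \<and> fst p < r0 + int k"

lemma in_window_cong_eq:
  assumes "in_window a" "in_window b" "[fst a = fst b] (mod int k)"
  shows "fst a = fst b"
proof -
  have "fst a mod int k = fst b mod int k" using assms(3) by (simp add: cong_def)
  then have "(fst a - r0) mod int k = (fst b - r0) mod int k" by (rule mod_diff_cong) simp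
  moreover have "(fst a - r0) mod int k = fst a - r0" "(fst b - r0) mod int k = fst b - r0"
    using assms(1,2) by (simp_all add: in_window_def)
  ultimately show ?thesis by simp
qed

end

locale fm_invariant = full_multi +
  fixes \<sigma> :: "'a::linorder fm_state"
  assumes inner_periodic: "shape_periodic (st_inner \<sigma>)"
    and outer_periodic: "shape_periodic (st_outer \<sigma>)"
    and reached_in_outer: "reached \<sigma> s y \<Longrightarrow> y \<le> st_outer \<sigma> s"
    and rows_sorted: "st_inner \<sigma> s < y \<Longrightarrow> y + 1 \<le> st_outer \<sigma> s \<Longrightarrow> entry \<sigma> s y \<le> entry \<sigma> s (y + 1)"
    and queue_above_reached: "a \<in> set (queued \<sigma>) \<Longrightarrow> [s = fst (snd a)] (mod int k) \<Longrightarrow>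
      st_inner \<sigma> s < y \<Longrightarrow> reached \<sigma> s y \<Longrightarrow> entry \<sigma> s y \<le> fst a"
    and queue_sorted:
      "sorted_wrt (\<lambda>a b. [fst (snd a) = fst (snd b)] (mod int k) \<longrightarrow> fst a \<le> fst b) (queued \<sigma>)"
    and reached_below_unreached: "st_inner \<sigma> (s + 1) < y \<Longrightarrow> reached \<sigma> (s + 1) y \<Longrightarrow>
      \<not> reached \<sigma> s y' \<Longrightarrow> y' \<le> st_outer \<sigma> s \<Longrightarrow> entry \<sigma> (s + 1) y \<le> entry \<sigma> s y'"
    and queue_below_unreached: "a \<in> set (queued \<sigma>) \<Longrightarrow> [s = fst (snd a) - 1] (mod int k) \<Longrightarrow>
      \<not> reached \<sigma> s y' \<Longrightarrow> y' \<le> st_outer \<sigma> s \<Longrightarrow> fst a \<le> entry \<sigma> s y'"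
    and keys_sorted: "sorted_wrt (<)
      (map log_key (st_log \<sigma>) @ map todo_key (st_todo \<sigma>) @ map queue_key (queued \<sigma>))"
    and todo_unreached: "p \<in> set (st_todo \<sigma>) \<Longrightarrow> \<not> reached \<sigma> (fst p) (snd p) \<and> in_window p"
    and removal_phase: "st_todo \<sigma> \<noteq> [] \<Longrightarrow>
      st_q' \<sigma> = [] \<and> (\<forall>s y. reached \<sigma> s y \<longrightarrow> y \<le> st_inner \<sigma> s)"
    and queue_levels: "\<exists>R. (\<forall>a\<in>set (st_q \<sigma>). fst (queue_key a) = R) \<and>
      (\<forall>b\<in>set (st_q' \<sigma>). fst (queue_key b) = R + 1) \<and> (st_todo \<sigma> \<noteq> [] \<longrightarrow> R = 1)"
    and queue_from_log:
      "a \<in> set (queued \<sigma>) \<Longrightarrow> (fst (queue_key a) - 1, snd (queue_key a)) \<in> log_key ` set (st_log \<sigma>)"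
    and log_moves_right: "sorted_wrt (\<lambda>e1 e2. [fst (snd e1) = fst (snd e2)] (mod int k) \<longrightarrow>
      rep_col (fst (snd e2)) (snd e1) < snd (snd e2)) (st_log \<sigma>)"
    and log_tags_in_window: "e \<in> set (st_log \<sigma>) \<Longrightarrow> in_window (fst e)"
begin

lemma inner_le_outer: "st_inner \<sigma> s \<le> st_outer \<sigma> s"
  using reached_in_outer by (simp add: reached_def)

end

context full_multi
begin

lemma fm_invariant_init:
  fixes T :: "box \<Rightarrow> 'a::linorder"
  assumes tableau: "ssyt n k lam mu T" and input: "multi_input n k mu S"
  shows "fm_invariant n k r0 (fm_init n k lam mu T S r0)"
proof -
  define \<sigma> where "\<sigma> = fm_init n k lam mu T S r0"
  have fields: "st_outer \<sigma> = lam" "st_inner \<sigma> = mu" "st_ent \<sigma> = T" "st_q \<sigma> = []" "st_q' \<sigma> = []"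
    "st_log \<sigma> = []" by (simp_all add: \<sigma>_def fm_init_def)
  have todo: "st_todo \<sigma> = concat (map (\<lambda>h. map (\<lambda>y. (h, y))
      (sorted_list_of_set {y. proj n k (h, y) \<in> S})) [r0..r0 + int k - 1])"
    by (simp add: \<sigma>_def fm_init_def)
  have reached_init: "reached \<sigma> s y \<longleftrightarrow> y \<le> mu s" for s y by (simp add: reached_def fields)
  have cyls: "cyl n k lam" "cyl n k mu" and mu_le_lam: "mu s \<le> lam s" for s
    using tableau by (simp_all add: ssyt_def)
  have rows: "T (proj n k (x, y)) \<le> T (proj n k (x, y + 1))"
    if "in_skew lam mu (x, y)" "in_skew lam mu (x, y + 1)" for x y
    using tableau that unfolding ssyt_def by blast
  have todo_mem: "proj n k p \<in> S \<and> in_window p" if "p \<in> set (st_todo \<sigma>)" for p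
    using that in_sorted_list_of_set by (auto simp: todo in_window_def)
  have "fm_invariant n k r0 \<sigma>"
  proof unfold_locales
    show "shape_periodic (st_inner \<sigma>)" "shape_periodic (st_outer \<sigma>)"
      using cyls cyl_shape_periodic by (simp_all add: fields)
    show "reached \<sigma> s y \<Longrightarrow> y \<le> st_outer \<sigma> s" for s y
      using mu_le_lam[of s] reached_init by (simp add: fields)
    show "entry \<sigma> s y \<le> entry \<sigma> s (y + 1)" if "st_inner \<sigma> s < y" "y + 1 \<le> st_outer \<sigma> s" for s y
      using rows that by (simp add: fields entry_def in_skew_def pt_in_def)
    show "\<not> reached \<sigma> (fst p) (snd p) \<and> in_window p" if "p \<in> set (st_todo \<sigma>)" for p
    proof -
      have "\<not> box_in mu (proj n k p)" using input todo_mem[OF that] by (simp add: multi_input_def)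
      then have "\<not> pt_in mu p" using in_proj_self unfolding box_in_def by blast
      then show ?thesis using todo_mem[OF that] reached_init by (simp add: pt_in_def)
    qed
    have "sorted_wrt (<) (st_todo \<sigma>)" unfolding todo
      by (rule sorted_wrt_concat_rows) (simp_all add: sorted_list_of_set.strict_sorted_key_list_of_set)
    then show "sorted_wrt (<)
        (map log_key (st_log \<sigma>) @ map todo_key (st_todo \<sigma>) @ map queue_key (queued \<sigma>))"
      by (simp add: fields sorted_wrt_map todo_key_def)
  qed (auto simp: fields reached_init)
  then show ?thesis by (simp add: \<sigma>_def)
qed

end

section \<open>Removal steps\<close>

locale removal_step = fm_invariant +
  fixes p :: pt and rest :: "pt list"
  assumes todo: "st_todo \<sigma> = p # rest"
begin

abbreviation \<sigma>' :: "'a fm_state" where "\<sigma>' \<equiv> fm_step n k \<sigma>"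

lemma queue'_empty: "st_q' \<sigma> = []"
  using removal_phase todo by simp

lemma reached_iff_inner: "reached \<sigma> s y \<longleftrightarrow> y \<le> st_inner \<sigma> s"
  using removal_phase todo by (auto simp: reached_def)

lemma p_unreached: "\<not> reached \<sigma> (fst p) (snd p)" and p_in_window: "in_window p"
  using todo_unreached[of p] todo by simp_all

lemma rep_col_shift:
  "[s = fst p] (mod int k) \<Longrightarrow> rep_col s p - ((fst p - s) div int k) * col_shift = snd p"
  by (simp add: rep_col_def)

lemma inner_lt_rep_col:
  assumes "[s = fst p] (mod int k)"
  shows "st_inner \<sigma> s < rep_col s p"
  using reached_cong[OF inner_periodic assms, of "rep_col s p"] p_unreached reached_iff_inner
  by (simp add: rep_col_shift[OF assms])

lemma rep_col_le_outer_iff: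
  assumes "[s = fst p] (mod int k)"
  shows "rep_col s p \<le> st_outer \<sigma> s \<longleftrightarrow> snd p \<le> st_outer \<sigma> (fst p)"
  using shape_periodic_cong[OF outer_periodic assms] rep_col_shift[OF assms] by linarith

lemma rest_right_of_p:
  assumes "p' \<in> set rest" and "[fst p' = fst p] (mod int k)"
  shows "fst p' = fst p \<and> snd p < snd p'"
proof -
  have "fst p' = fst p" using in_window_cong_eq todo_unreached assms todo p_in_window by simp
  moreover have "todo_key p < todo_key p'"
    using keys_sorted todo assms(1) by (simp add: sorted_wrt_append)
  ultimately show ?thesis by (cases p, cases p') (simp add: todo_key_def)
qed

lemma step_fields:
  "st_todo \<sigma>' = rest" "st_inner \<sigma>' = add_box (st_inner \<sigma>) (proj n k p)"
  "st_log \<sigma>' = st_log \<sigma> @ [(p, p)]" "st_ent \<sigma>' = st_ent \<sigma>" "st_q' \<sigma>' = []"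
  using queue'_empty by (cases "snd p \<le> st_outer \<sigma> (fst p)"; simp add: fm_step_def todo Let_def)+

lemma inner_step: "st_inner \<sigma>' s = (if [s = fst p] (mod int k) then rep_col s p else st_inner \<sigma> s)"
  using inner_lt_rep_col[of s] by (simp add: step_fields add_box_proj)

lemma inner_le_inner_step: "st_inner \<sigma> s \<le> st_inner \<sigma>' s"
  using inner_lt_rep_col[of s] by (force simp: inner_step)

lemma entry_step: "entry \<sigma>' = entry \<sigma>"
  by (simp add: fun_eq_iff entry_def step_fields)

lemma reached_step_iff: "reached \<sigma>' s y \<longleftrightarrow> y \<le> st_inner \<sigma>' s"
proof
  assume "reached \<sigma>' s y"
  then consider "y \<le> st_inner \<sigma>' s" | "reached \<sigma> s y" | "[s = fst p] (mod int k)" "y \<le> rep_col s p"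
    unfolding reached_def by (auto simp: step_fields)
  then show "y \<le> st_inner \<sigma>' s"
    using inner_step[of s] reached_iff_inner inner_le_inner_step[of s] by cases auto
qed (simp add: reached_def)

lemma inner_periodic_step: "shape_periodic (st_inner \<sigma>')"
  using inner_periodic shape_periodic_add_box by (simp add: step_fields)

lemma todo_unreached_step: "p' \<in> set (st_todo \<sigma>') \<Longrightarrow> \<not> reached \<sigma>' (fst p') (snd p') \<and> in_window p'"
  using todo_unreached[of p'] rest_right_of_p[of p'] reached_iff_inner inner_step[of "fst p'"]
  by (auto simp: step_fields todo reached_step_iff rep_col_def)

lemma log_moves_right_step: "sorted_wrt (\<lambda>e1 e2. [fst (snd e1) = fst (snd e2)] (mod int k) \<longrightarrow>
    rep_col (fst (snd e2)) (snd e1) < snd (snd e2)) (st_log \<sigma>')"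
proof -
  have "rep_col (fst p) q < snd p"
    if "(t, q) \<in> set (st_log \<sigma>)" "[fst q = fst p] (mod int k)" for t q
    using p_unreached that cong_sym unfolding reached_def by fastforce
  then show ?thesis using log_moves_right by (auto simp: step_fields sorted_wrt_append)
qed

lemma log_tags_in_window_step: "e \<in> set (st_log \<sigma>') \<Longrightarrow> in_window (fst e)"
  using log_tags_in_window[of e] p_in_window by (auto simp: step_fields)

lemma queue_above_reached_step: "a \<in> set (queued \<sigma>') \<Longrightarrow> [s = fst (snd a)] (mod int k) \<Longrightarrow>
    st_inner \<sigma>' s < y \<Longrightarrow> reached \<sigma>' s y \<Longrightarrow> entry \<sigma>' s y \<le> fst a"
  by (simp add: reached_step_iff)

lemma reached_below_unreached_step: "st_inner \<sigma>' (s + 1) < y \<Longrightarrow> reached \<sigma>' (s + 1) y \<Longrightarrow>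
    \<not> reached \<sigma>' s y' \<Longrightarrow> y' \<le> st_outer \<sigma>' s \<Longrightarrow> entry \<sigma>' (s + 1) y \<le> entry \<sigma>' s y'"
  by (simp add: reached_step_iff)

lemma removal_phase_step:
  "st_todo \<sigma>' \<noteq> [] \<Longrightarrow> st_q' \<sigma>' = [] \<and> (\<forall>s y. reached \<sigma>' s y \<longrightarrow> y \<le> st_inner \<sigma>' s)"
  by (simp add: step_fields reached_step_iff)

lemma log_todo_keys_step:
  "map log_key (st_log \<sigma>') @ map todo_key (st_todo \<sigma>') =
    map log_key (st_log \<sigma>) @ map todo_key (st_todo \<sigma>)"
  by (simp add: step_fields todo log_key_def todo_key_def)

lemma entry_rep_col: "[s = fst p] (mod int k) \<Longrightarrow> entry \<sigma> s (rep_col s p) = st_ent \<sigma> (proj n k p)"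
  using proj_pair_eq_iff[of s "rep_col s p" p] by (simp add: entry_def)

end

locale removal_occupied = removal_step +
  assumes occupied: "snd p \<le> st_outer \<sigma> (fst p)"
begin

definition new_pair :: "'a \<times> int \<times> pt" where
  "new_pair = (st_ent \<sigma> (proj n k p), fst p + 1, p)"

lemma step_outer: "st_outer \<sigma>' = st_outer \<sigma>" and step_queue: "st_q \<sigma>' = st_q \<sigma> @ [new_pair]"
  using occupied by (simp_all add: fm_step_def todo Let_def new_pair_def)

lemma outer_periodic_step: "shape_periodic (st_outer \<sigma>')"
  using outer_periodic by (simp add: step_outer)

lemma queued_step: "queued \<sigma>' = queued \<sigma> @ [new_pair]"
  by (simp add: step_queue step_fields queue'_empty)

lemma inner_step_le_outer: "st_inner \<sigma>' s \<le> st_outer \<sigma> s"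
  using inner_le_outer[of s] rep_col_le_outer_iff[of s] occupied by (simp add: inner_step)

lemma reached_in_outer_step: "reached \<sigma>' s y \<Longrightarrow> y \<le> st_outer \<sigma>' s"
  using inner_step_le_outer[of s] by (simp add: reached_step_iff step_outer)

lemma rows_sorted_step:
  "st_inner \<sigma>' s < y \<Longrightarrow> y + 1 \<le> st_outer \<sigma>' s \<Longrightarrow> entry \<sigma>' s y \<le> entry \<sigma>' s (y + 1)"
  using rows_sorted inner_le_inner_step[of s] by (simp add: entry_step step_outer)

lemma queue_sorted_step:
  "sorted_wrt (\<lambda>a b. [fst (snd a) = fst (snd b)] (mod int k) \<longrightarrow> fst a \<le> fst b) (queued \<sigma>')"
proof -
  have "fst b \<le> fst new_pair"
    if "b \<in> set (queued \<sigma>)" "[fst (snd b) = fst p + 1] (mod int k)" for b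
  proof -
    have "[fst p = fst (snd b) - 1] (mod int k)"
      using that(2) cong_sym by (metis add_diff_cancel_right' cong_diff cong_refl)
    then show ?thesis using queue_below_unreached[OF that(1), of "fst p" "snd p"] p_unreached occupied
      by (simp add: new_pair_def entry_def)
  qed
  then show ?thesis using queue_sorted by (simp add: queued_step sorted_wrt_append new_pair_def)
qed

lemma queue_below_unreached_step:
  assumes "b \<in> set (queued \<sigma>')" "[s = fst (snd b) - 1] (mod int k)"
    and "\<not> reached \<sigma>' s y'" "y' \<le> st_outer \<sigma>' s"
  shows "fst b \<le> entry \<sigma>' s y'"
proof (cases "b = new_pair")
  case True
  then have s: "[s = fst p] (mod int k)" using assms(2) by (simp add: new_pair_def)
  have "entry \<sigma> s (rep_col s p) \<le> entry \<sigma> s y'"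
    using mono_on_int_interval[of "st_inner \<sigma> s" "st_outer \<sigma> s" "entry \<sigma> s"] rows_sorted
      inner_lt_rep_col[OF s] assms(3,4) inner_step[of s] s
    by (simp add: reached_step_iff step_outer)
  then show ?thesis using True entry_rep_col[OF s] by (simp add: new_pair_def entry_step)
next
  case False
  then have "b \<in> set (queued \<sigma>)" using assms(1) by (simp add: queued_step)
  moreover have "\<not> reached \<sigma> s y'"
    using assms(3) inner_le_inner_step[of s] by (simp add: reached_iff_inner reached_step_iff)
  ultimately show ?thesis using queue_below_unreached assms(2,4) by (simp add: entry_step step_outer)
qed

lemma queue_levels_old: "a \<in> set (st_q \<sigma>) \<Longrightarrow> fst (queue_key a) = 1"
  using queue_levels todo by auto

lemma keys_sorted_step:
  "sorted_wrt (<) (map log_key (st_log \<sigma>') @ map todo_key (st_todo \<sigma>') @ map queue_key (queued \<sigma>'))"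
proof -
  let ?old = "map log_key (st_log \<sigma>) @ map todo_key (st_todo \<sigma>) @ map queue_key (queued \<sigma>)"
  have log_below: "z < todo_key p" if "z \<in> log_key ` set (st_log \<sigma>)" for z
    using keys_sorted that todo by (auto simp: sorted_wrt_append)
  have "z < queue_key new_pair" if z: "z \<in> set ?old" for z
  proof -
    have key: "queue_key new_pair = (1, p)" by (simp add: queue_key_def new_pair_def)
    consider "z \<in> log_key ` set (st_log \<sigma>)" | "z \<in> todo_key ` set (st_todo \<sigma>)"
      | b where "b \<in> set (st_q \<sigma>)" "z = queue_key b"
      using z queue'_empty by auto
    then show ?thesis
    proof cases
      case 1
      moreover have "todo_key p < queue_key new_pair" by (simp add: key todo_key_def)
      ultimately show ?thesis using log_below by (blast intro: less_trans)
    next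
      case 3
      then have "(0, snd (queue_key b)) \<in> log_key ` set (st_log \<sigma>)"
        using queue_from_log[of b] queue_levels_old[of b] by simp
      then have "(0, snd (queue_key b)) < todo_key p" by (rule log_below)
      then show ?thesis using 3 key queue_levels_old[of b]
        by (cases "queue_key b") (simp add: todo_key_def)
    qed (auto simp: key todo_key_def)
  qed
  then show ?thesis using keys_sorted
    by (simp only: append_assoc[symmetric] log_todo_keys_step) (simp add: queued_step sorted_wrt_append)
qed

lemma queue_levels_step: "\<exists>R. (\<forall>a\<in>set (st_q \<sigma>'). fst (queue_key a) = R) \<and>
    (\<forall>b\<in>set (st_q' \<sigma>'). fst (queue_key b) = R + 1) \<and> (st_todo \<sigma>' \<noteq> [] \<longrightarrow> R = 1)"
  using queue_levels_old by (auto simp: step_queue step_fields queue_key_def new_pair_def)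

lemma queue_from_log_step:
  "a \<in> set (queued \<sigma>') \<Longrightarrow> (fst (queue_key a) - 1, snd (queue_key a)) \<in> log_key ` set (st_log \<sigma>')"
  using queue_from_log[of a] by (auto simp: step_queue queue'_empty step_fields queue_key_def
      new_pair_def log_key_def)

lemma fm_invariant_step: "fm_invariant n k r0 \<sigma>'"
  by unfold_locales (fact k_pos inner_periodic_step outer_periodic_step reached_in_outer_step
      rows_sorted_step queue_above_reached_step queue_sorted_step reached_below_unreached_step
      queue_below_unreached_step keys_sorted_step todo_unreached_step removal_phase_step
      queue_levels_step queue_from_log_step log_moves_right_step log_tags_in_window_step)+

end

locale removal_vacant = removal_step +
  assumes vacant: "st_outer \<sigma> (fst p) < snd p"
begin

lemma step_outer: "st_outer \<sigma>' = add_box (st_outer \<sigma>) (proj n k p)"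
  and step_queue: "st_q \<sigma>' = st_q \<sigma>"
  using vacant by (simp_all add: fm_step_def todo Let_def)

lemma outer_step: "st_outer \<sigma>' s = (if [s = fst p] (mod int k) then rep_col s p else st_outer \<sigma> s)"
  using rep_col_le_outer_iff[of s] vacant by (auto simp: step_outer add_box_proj max_def)

lemma queued_step: "queued \<sigma>' = queued \<sigma>"
  by (simp add: step_queue step_fields queue'_empty)

lemma unreached_step: "\<not> reached \<sigma>' s y \<Longrightarrow> y \<le> st_outer \<sigma>' s \<Longrightarrow>
    \<not> [s = fst p] (mod int k) \<and> \<not> reached \<sigma> s y \<and> y \<le> st_outer \<sigma> s"
  using inner_step[of s] outer_step[of s]
  by (auto simp: reached_step_iff reached_iff_inner split: if_splits)

lemma outer_periodic_step: "shape_periodic (st_outer \<sigma>')"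
  using outer_periodic shape_periodic_add_box by (simp add: step_outer)

lemma reached_in_outer_step: "reached \<sigma>' s y \<Longrightarrow> y \<le> st_outer \<sigma>' s"
  using inner_le_outer[of s] by (auto simp: reached_step_iff inner_step outer_step)

lemma rows_sorted_step:
  "st_inner \<sigma>' s < y \<Longrightarrow> y + 1 \<le> st_outer \<sigma>' s \<Longrightarrow> entry \<sigma>' s y \<le> entry \<sigma>' s (y + 1)"
  using rows_sorted[of s y] by (auto simp: entry_step inner_step outer_step split: if_splits)

lemma queue_sorted_step:
  "sorted_wrt (\<lambda>a b. [fst (snd a) = fst (snd b)] (mod int k) \<longrightarrow> fst a \<le> fst b) (queued \<sigma>')"
  using queue_sorted by (simp add: queued_step)

lemma queue_below_unreached_step:
  "b \<in> set (queued \<sigma>') \<Longrightarrow> [s = fst (snd b) - 1] (mod int k) \<Longrightarrow>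
    \<not> reached \<sigma>' s y' \<Longrightarrow> y' \<le> st_outer \<sigma>' s \<Longrightarrow> fst b \<le> entry \<sigma>' s y'"
  using queue_below_unreached unreached_step by (simp add: queued_step entry_step)

lemma keys_sorted_step:
  "sorted_wrt (<) (map log_key (st_log \<sigma>') @ map todo_key (st_todo \<sigma>') @ map queue_key (queued \<sigma>'))"
  using keys_sorted by (simp only: append_assoc[symmetric] log_todo_keys_step queued_step)

lemma queue_levels_step: "\<exists>R. (\<forall>a\<in>set (st_q \<sigma>'). fst (queue_key a) = R) \<and>
    (\<forall>b\<in>set (st_q' \<sigma>'). fst (queue_key b) = R + 1) \<and> (st_todo \<sigma>' \<noteq> [] \<longrightarrow> R = 1)"
  using queue_levels todo by (auto simp: step_queue step_fields)

lemma queue_from_log_step: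
  "a \<in> set (queued \<sigma>') \<Longrightarrow> (fst (queue_key a) - 1, snd (queue_key a)) \<in> log_key ` set (st_log \<sigma>')"
  using queue_from_log[of a] by (auto simp: step_queue queue'_empty step_fields)

lemma fm_invariant_step: "fm_invariant n k r0 \<sigma>'"
  by unfold_locales (fact k_pos inner_periodic_step outer_periodic_step reached_in_outer_step
      rows_sorted_step queue_above_reached_step queue_sorted_step reached_below_unreached_step
      queue_below_unreached_step keys_sorted_step todo_unreached_step removal_phase_step
      queue_levels_step queue_from_log_step log_moves_right_step log_tags_in_window_step)+

end

section \<open>Queue steps\<close>

text \<open>The common shape of the two queue steps: the letter x of the queue head is written at
  (s0, y0), beyond everything reached in row s0 and after all entries of row s0 that are \<le> x.\<close>

locale queue_event = fm_invariant +
  fixes x :: "'a::linorder" and s0 :: int and t :: pt and q1 :: "('a \<times> int \<times> pt) list"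
    and y0 :: int and \<sigma>' :: "'a fm_state"
  assumes todo: "st_todo \<sigma> = []"
    and queue: "st_q \<sigma> = (x, s0, t) # q1"
    and y0_unreached: "\<not> reached \<sigma> s0 y0"
    and below_y0: "st_inner \<sigma> s0 < y \<Longrightarrow> y < y0 \<Longrightarrow> entry \<sigma> s0 y \<le> x"
    and step_todo: "st_todo \<sigma>' = []"
    and step_inner: "st_inner \<sigma>' = st_inner \<sigma>"
    and step_queue: "st_q \<sigma>' = q1"
    and step_ent: "st_ent \<sigma>' = (st_ent \<sigma>)(proj n k (s0, y0) := x)"
    and step_log: "st_log \<sigma>' = st_log \<sigma> @ [(t, (s0, y0))]"
    and unreached_in_outer_step: "\<not> reached \<sigma>' s y \<Longrightarrow> y \<le> st_outer \<sigma>' s \<Longrightarrow> y \<le> st_outer \<sigma> s"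
begin

abbreviation event_col :: "int \<Rightarrow> int" where "event_col s \<equiv> rep_col s (s0, y0)"

lemma queued_old: "queued \<sigma> = (x, s0, t) # q1 @ st_q' \<sigma>"
  by (simp add: queue)

lemma entry_step: "entry \<sigma>' s y = (if [s = s0] (mod int k) \<and> y = event_col s then x else entry \<sigma> s y)"
  using entry_update[OF step_ent] by simp

lemma reached_step: "reached \<sigma>' s y \<longleftrightarrow> reached \<sigma> s y \<or> ([s = s0] (mod int k) \<and> y \<le> event_col s)"
  using reached_log_append[OF step_inner step_log] by simp

lemma rep_col_shift: "[s = s0] (mod int k) \<Longrightarrow> event_col s - ((s0 - s) div int k) * col_shift = y0"
  by (simp add: rep_col_def)

lemma rep_col_unreached: "[s = s0] (mod int k) \<Longrightarrow> \<not> reached \<sigma> s (event_col s)"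
  using reached_cong[OF inner_periodic, of s s0 "event_col s"] y0_unreached by (simp add: rep_col_shift)

lemma inner_lt_rep_col: "[s = s0] (mod int k) \<Longrightarrow> st_inner \<sigma> s < event_col s"
  using rep_col_unreached by (force simp: reached_def)

lemma reached_lt_rep_col: "[s = s0] (mod int k) \<Longrightarrow> reached \<sigma> s y \<Longrightarrow> y < event_col s"
  using rep_col_unreached reached_mono by (meson not_le)

lemma below_rep_col:
  assumes s: "[s = s0] (mod int k)" and "st_inner \<sigma> s < y" "y < event_col s"
  shows "entry \<sigma> s y \<le> x"
proof -
  define d where "d = ((s0 - s) div int k) * col_shift"
  have "st_inner \<sigma> s0 < y - d" "y - d < y0"
    using assms shape_periodic_cong[OF inner_periodic s] rep_col_shift[OF s] d_def by linarith+
  then show ?thesis using below_y0 entry_cong[OF s, of \<sigma> y] d_def by simp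
qed

lemma entry_step_le:
  "[s = s0] (mod int k) \<Longrightarrow> st_inner \<sigma> s < y \<Longrightarrow> y \<le> event_col s \<Longrightarrow> entry \<sigma>' s y \<le> x"
  using below_rep_col[of s y] by (cases "y = event_col s") (simp_all add: entry_step)

lemma unreached_step:
  "\<not> reached \<sigma>' s y \<Longrightarrow>
    \<not> reached \<sigma> s y \<and> ([s = s0] (mod int k) \<longrightarrow> event_col s < y) \<and> entry \<sigma>' s y = entry \<sigma> s y"
  by (auto simp: reached_step entry_step)

lemma x_le_queue:
  "b \<in> set (q1 @ st_q' \<sigma>) \<Longrightarrow> [s0 = fst (snd b)] (mod int k) \<Longrightarrow> x \<le> fst b"
  using queue_sorted by (simp add: queued_old)

lemma x_le_unreached_above:
  "[s = s0 - 1] (mod int k) \<Longrightarrow> \<not> reached \<sigma> s y' \<Longrightarrow> y' \<le> st_outer \<sigma> s \<Longrightarrow> x \<le> entry \<sigma> s y'"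
  using queue_below_unreached[of "(x, s0, t)"] by (simp add: queued_old)

lemma inner_periodic_step: "shape_periodic (st_inner \<sigma>')"
  using inner_periodic by (simp add: step_inner)

lemma queue_above_reached_old:
  assumes "b \<in> set (q1 @ st_q' \<sigma>)" "[s = fst (snd b)] (mod int k)"
    and "st_inner \<sigma>' s < y" "reached \<sigma>' s y"
  shows "entry \<sigma>' s y \<le> fst b"
proof (cases "[s = s0] (mod int k)")
  case True
  then have "y \<le> event_col s" using assms(4) reached_lt_rep_col by (force simp: reached_step)
  then have "entry \<sigma>' s y \<le> x" using entry_step_le True assms(3) by (simp add: step_inner)
  also have "x \<le> fst b" using x_le_queue assms(1,2) True cong_sym cong_trans by blast
  finally show ?thesis .
next
  case False
  then show ?thesis using queue_above_reached[of b s y] assms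
    by (simp add: queued_old reached_step entry_step step_inner)
qed

lemma reached_below_unreached_step:
  assumes "st_inner \<sigma>' (s + 1) < y" "reached \<sigma>' (s + 1) y"
    and "\<not> reached \<sigma>' s y'" "y' \<le> st_outer \<sigma>' s"
  shows "entry \<sigma>' (s + 1) y \<le> entry \<sigma>' s y'"
proof -
  have old: "\<not> reached \<sigma> s y'" "entry \<sigma>' s y' = entry \<sigma> s y'" "y' \<le> st_outer \<sigma> s"
    using unreached_step[OF assms(3)] unreached_in_outer_step[OF assms(3,4)] by simp_all
  show ?thesis
  proof (cases "[s + 1 = s0] (mod int k)")
    case True
    then have "y \<le> event_col (s + 1)" using assms(2) reached_lt_rep_col by (force simp: reached_step)
    then have "entry \<sigma>' (s + 1) y \<le> x" using entry_step_le True assms(1) by (simp add: step_inner)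
    also have "x \<le> entry \<sigma> s y'"
      using x_le_unreached_above old True by (simp add: cong_iff_lin algebra_simps)
    finally show ?thesis using old by simp
  next
    case False
    then show ?thesis using reached_below_unreached[of s y y'] assms(1,2) old
      by (simp add: reached_step entry_step step_inner)
  qed
qed

lemma queue_below_unreached_old:
  "b \<in> set (q1 @ st_q' \<sigma>) \<Longrightarrow> [s = fst (snd b) - 1] (mod int k) \<Longrightarrow>
    \<not> reached \<sigma>' s y' \<Longrightarrow> y' \<le> st_outer \<sigma>' s \<Longrightarrow> fst b \<le> entry \<sigma>' s y'"
  using queue_below_unreached[of b s y'] unreached_step[of s y'] unreached_in_outer_step[of s y']
  by (simp add: queued_old)

lemma todo_unreached_step: "p \<in> set (st_todo \<sigma>') \<Longrightarrow> \<not> reached \<sigma>' (fst p) (snd p) \<and> in_window p"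
  and removal_phase_step:
    "st_todo \<sigma>' \<noteq> [] \<Longrightarrow> st_q' \<sigma>' = [] \<and> (\<forall>s y. reached \<sigma>' s y \<longrightarrow> y \<le> st_inner \<sigma>' s)"
  by (simp_all add: step_todo)

lemma keys_step: "map log_key (st_log \<sigma>') @ map queue_key (q1 @ st_q' \<sigma>) =
    map log_key (st_log \<sigma>) @ map todo_key (st_todo \<sigma>) @ map queue_key (queued \<sigma>)"
  by (simp add: step_log todo queue log_key_def queue_key_def)

lemma queue_from_log_old: "b \<in> set (q1 @ st_q' \<sigma>) \<Longrightarrow>
    (fst (queue_key b) - 1, snd (queue_key b)) \<in> log_key ` set (st_log \<sigma>')"
  using queue_from_log[of b] by (auto simp: queued_old step_log)

lemma log_moves_right_step: "sorted_wrt (\<lambda>e1 e2. [fst (snd e1) = fst (snd e2)] (mod int k) \<longrightarrow>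
    rep_col (fst (snd e2)) (snd e1) < snd (snd e2)) (st_log \<sigma>')"
proof -
  have "rep_col s0 q < y0" if "(t', q) \<in> set (st_log \<sigma>)" "[fst q = s0] (mod int k)" for t' q
    using y0_unreached that cong_sym unfolding reached_def by fastforce
  then show ?thesis using log_moves_right by (auto simp: step_log sorted_wrt_append)
qed

lemma log_tags_in_window_step:
  assumes "e \<in> set (st_log \<sigma>')"
  shows "in_window (fst e)"
proof -
  obtain e0 where "e0 \<in> set (st_log \<sigma>)" "fst e0 = t"
    using queue_from_log[of "(x, s0, t)"] by (auto simp: queued_old log_key_def queue_key_def)
  then show ?thesis using assms log_tags_in_window[of e0] log_tags_in_window[of e]
    by (auto simp: step_log)
qed

end

locale placement = fm_invariant +
  fixes x :: "'a::linorder" and s0 :: int and t :: pt and q1 :: "('a \<times> int \<times> pt) list"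
  assumes todo_empty: "st_todo \<sigma> = []"
    and queue_head: "st_q \<sigma> = (x, s0, t) # q1"
    and head_dominates: "\<forall>y. st_inner \<sigma> s0 < y \<and> y \<le> st_outer \<sigma> s0 \<longrightarrow> st_ent \<sigma> (proj n k (s0, y)) \<le> x"
begin

abbreviation \<sigma>' :: "'a fm_state" where "\<sigma>' \<equiv> fm_step n k \<sigma>"

lemma step_eq: "\<sigma>' = \<sigma>\<lparr>st_q := q1,
    st_outer := add_box (st_outer \<sigma>) (proj n k (s0, st_outer \<sigma> s0 + 1)),
    st_ent := (st_ent \<sigma>)(proj n k (s0, st_outer \<sigma> s0 + 1) := x),
    st_log := st_log \<sigma> @ [(t, (s0, st_outer \<sigma> s0 + 1))]\<rparr>"
  using todo_empty queue_head head_dominates by (simp add: fm_step_def Let_def)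

lemma rep_col_new:
  assumes "[s = s0] (mod int k)"
  shows "rep_col s (s0, st_outer \<sigma> s0 + 1) = st_outer \<sigma> s + 1"
  using shape_periodic_cong[OF outer_periodic assms] by (simp add: rep_col_def)

lemma outer_step: "st_outer \<sigma>' s =
    (if [s = s0] (mod int k) then st_outer \<sigma> s + 1 else st_outer \<sigma> s)"
  using rep_col_new[of s] by (simp add: step_eq add_box_proj)

end

sublocale placement \<subseteq> queue_event n k r0 \<sigma> x s0 t q1 "st_outer \<sigma> s0 + 1" "fm_step n k \<sigma>"
proof unfold_locales
  show "\<not> reached \<sigma> s0 (st_outer \<sigma> s0 + 1)" using reached_in_outer by force
  show "entry \<sigma> s0 y \<le> x" if "st_inner \<sigma> s0 < y" "y < st_outer \<sigma> s0 + 1" for y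
    using head_dominates that by (simp add: entry_def)
  show "y \<le> st_outer \<sigma> s" if "\<not> reached \<sigma>' s y" "y \<le> st_outer \<sigma>' s" for s y
  proof -
    have "\<not> [s = s0] (mod int k) \<or> st_outer \<sigma> s + 1 < y"
      using that(1) reached_log_append[of \<sigma>' \<sigma> t "(s0, st_outer \<sigma> s0 + 1)" s y] rep_col_new[of s]
      by (auto simp: step_eq)
    then show ?thesis using that(2) by (auto simp: outer_step split: if_splits)
  qed
qed (simp_all add: todo_empty queue_head step_eq)

context placement
begin

lemma outer_periodic_step: "shape_periodic (st_outer \<sigma>')"
  using outer_periodic shape_periodic_add_box by (simp add: step_eq)

lemma queued_step: "queued \<sigma>' = q1 @ st_q' \<sigma>"
  by (simp add: step_eq)

lemma reached_in_outer_step: "reached \<sigma>' s y \<Longrightarrow> y \<le> st_outer \<sigma>' s"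
  using reached_in_outer[of s y] rep_col_new[of s] by (auto simp: reached_step outer_step)

lemma rows_sorted_step:
  assumes "st_inner \<sigma>' s < y" "y + 1 \<le> st_outer \<sigma>' s"
  shows "entry \<sigma>' s y \<le> entry \<sigma>' s (y + 1)"
proof (cases "[s = s0] (mod int k) \<and> y + 1 = st_outer \<sigma> s + 1")
  case True
  then show ?thesis using below_rep_col[of s y] assms(1) rep_col_new[of s]
    by (simp add: entry_step step_inner)
next
  case False
  then have "y + 1 \<le> st_outer \<sigma> s" using assms(2) by (auto simp: outer_step split: if_splits)
  then show ?thesis using rows_sorted[of s y] assms(1) rep_col_new[of s]
    by (auto simp: entry_step step_inner)
qed

lemma queue_above_reached_step: "a \<in> set (queued \<sigma>') \<Longrightarrow> [s = fst (snd a)] (mod int k) \<Longrightarrow>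
    st_inner \<sigma>' s < y \<Longrightarrow> reached \<sigma>' s y \<Longrightarrow> entry \<sigma>' s y \<le> fst a"
  using queue_above_reached_old by (simp add: queued_step)

lemma queue_sorted_step:
  "sorted_wrt (\<lambda>a b. [fst (snd a) = fst (snd b)] (mod int k) \<longrightarrow> fst a \<le> fst b) (queued \<sigma>')"
  using queue_sorted by (simp add: queued_step queued_old)

lemma queue_below_unreached_step: "a \<in> set (queued \<sigma>') \<Longrightarrow> [s = fst (snd a) - 1] (mod int k) \<Longrightarrow>
    \<not> reached \<sigma>' s y' \<Longrightarrow> y' \<le> st_outer \<sigma>' s \<Longrightarrow> fst a \<le> entry \<sigma>' s y'"
  using queue_below_unreached_old by (simp add: queued_step)

lemma keys_sorted_step:
  "sorted_wrt (<) (map log_key (st_log \<sigma>') @ map todo_key (st_todo \<sigma>') @ map queue_key (queued \<sigma>'))"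
  using keys_sorted by (simp only: queued_step step_todo list.map(1) append_Nil keys_step)

lemma queue_levels_step: "\<exists>R. (\<forall>a\<in>set (st_q \<sigma>'). fst (queue_key a) = R) \<and>
    (\<forall>b\<in>set (st_q' \<sigma>'). fst (queue_key b) = R + 1) \<and> (st_todo \<sigma>' \<noteq> [] \<longrightarrow> R = 1)"
  using queue_levels by (auto simp: step_eq queue_head)

lemma queue_from_log_step:
  "a \<in> set (queued \<sigma>') \<Longrightarrow> (fst (queue_key a) - 1, snd (queue_key a)) \<in> log_key ` set (st_log \<sigma>')"
  using queue_from_log_old by (simp add: queued_step)

lemma fm_invariant_step: "fm_invariant n k r0 \<sigma>'"
  by unfold_locales (fact k_pos inner_periodic_step outer_periodic_step reached_in_outer_step
      rows_sorted_step queue_above_reached_step queue_sorted_step reached_below_unreached_step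
      queue_below_unreached_step keys_sorted_step todo_unreached_step removal_phase_step
      queue_levels_step queue_from_log_step log_moves_right_step log_tags_in_window_step)+

end

locale bumping = fm_invariant +
  fixes x :: "'a::linorder" and s0 :: int and t :: pt and q1 :: "('a \<times> int \<times> pt) list"
  assumes todo_empty: "st_todo \<sigma> = []"
    and queue_head: "st_q \<sigma> = (x, s0, t) # q1"
    and head_bumps:
      "\<not> (\<forall>y. st_inner \<sigma> s0 < y \<and> y \<le> st_outer \<sigma> s0 \<longrightarrow> st_ent \<sigma> (proj n k (s0, y)) \<le> x)"
begin

abbreviation \<sigma>' :: "'a fm_state" where "\<sigma>' \<equiv> fm_step n k \<sigma>"

definition y_bump :: int where
  "y_bump = (LEAST y. st_inner \<sigma> s0 < y \<and> y \<le> st_outer \<sigma> s0 \<and> x < st_ent \<sigma> (proj n k (s0, y)))"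

definition bumped :: 'a where
  "bumped = st_ent \<sigma> (proj n k (s0, y_bump))"

definition new_pair :: "'a \<times> int \<times> pt" where
  "new_pair = (bumped, s0 + 1, t)"

lemma y_bump: "st_inner \<sigma> s0 < y_bump" "y_bump \<le> st_outer \<sigma> s0" "x < bumped"
  and y_bump_least: "st_inner \<sigma> s0 < y \<Longrightarrow> y < y_bump \<Longrightarrow> entry \<sigma> s0 y \<le> x"
proof -
  let ?P = "\<lambda>y. st_inner \<sigma> s0 < y \<and> y \<le> st_outer \<sigma> s0 \<and> x < st_ent \<sigma> (proj n k (s0, y))"
  obtain y1 where y1: "?P y1" using head_bumps by (auto simp: not_le)
  have "?P y_bump" "\<And>y. ?P y \<Longrightarrow> y_bump \<le> y"
    unfolding y_bump_def using Least_int_bounded[of ?P y1 "st_inner \<sigma> s0" "st_outer \<sigma> s0"] y1 by auto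
  then show "st_inner \<sigma> s0 < y_bump" "y_bump \<le> st_outer \<sigma> s0" "x < bumped"
    "st_inner \<sigma> s0 < y \<Longrightarrow> y < y_bump \<Longrightarrow> entry \<sigma> s0 y \<le> x"
    by (force simp: bumped_def entry_def not_le)+
qed

lemma step_eq: "\<sigma>' = \<sigma>\<lparr>st_q := q1, st_ent := (st_ent \<sigma>)(proj n k (s0, y_bump) := x),
    st_q' := st_q' \<sigma> @ [new_pair], st_log := st_log \<sigma> @ [(t, (s0, y_bump))]\<rparr>"
proof -
  have "(\<forall>y. st_inner \<sigma> s0 < y \<and> y \<le> st_outer \<sigma> s0 \<longrightarrow> st_ent \<sigma> (proj n k (s0, y)) \<le> x) = False"
    using head_bumps by blast
  then show ?thesis unfolding fm_step_def using todo_empty queue_head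
    by (simp only: list.case prod.case if_False Let_def) (simp add: y_bump_def bumped_def new_pair_def)
qed

lemma y_bump_unreached: "\<not> reached \<sigma> s0 y_bump"
  using queue_above_reached[of "(x, s0, t)" s0 y_bump] y_bump queue_head
  by (auto simp: bumped_def entry_def)

end

sublocale bumping \<subseteq> queue_event n k r0 \<sigma> x s0 t q1 y_bump "fm_step n k \<sigma>"
  by unfold_locales
    (simp_all add: todo_empty queue_head y_bump_unreached y_bump_least step_eq)

context bumping
begin

lemma entry_rep_col: "[s = s0] (mod int k) \<Longrightarrow> entry \<sigma> s (event_col s) = bumped"
  using proj_pair_eq_iff[of s "event_col s" "(s0, y_bump)"] by (simp add: entry_def bumped_def)

lemma rep_col_le_outer: "[s = s0] (mod int k) \<Longrightarrow> event_col s \<le> st_outer \<sigma> s"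
  using shape_periodic_cong[OF outer_periodic, of s s0] rep_col_shift[of s] y_bump(2) by simp

lemma outer_step: "st_outer \<sigma>' = st_outer \<sigma>"
  and queued_step: "queued \<sigma>' = q1 @ st_q' \<sigma> @ [new_pair]"
  by (simp_all add: step_eq)

lemma outer_periodic_step: "shape_periodic (st_outer \<sigma>')"
  using outer_periodic by (simp add: outer_step)

lemma reached_in_outer_step: "reached \<sigma>' s y \<Longrightarrow> y \<le> st_outer \<sigma>' s"
  using reached_in_outer[of s y] rep_col_le_outer[of s] by (auto simp: reached_step outer_step)

lemma rows_sorted_step:
  assumes "st_inner \<sigma>' s < y" "y + 1 \<le> st_outer \<sigma>' s"
  shows "entry \<sigma>' s y \<le> entry \<sigma>' s (y + 1)"
proof -
  have old: "entry \<sigma> s y \<le> entry \<sigma> s (y + 1)"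
    using rows_sorted assms by (simp add: step_inner outer_step)
  consider "[s = s0] (mod int k)" "y = event_col s" | "[s = s0] (mod int k)" "y + 1 = event_col s"
    | "\<not> ([s = s0] (mod int k) \<and> (y = event_col s \<or> y + 1 = event_col s))" by blast
  then show ?thesis
  proof cases
    case 1
    then show ?thesis using old y_bump(3) entry_rep_col by (simp add: entry_step)
  next
    case 2
    then show ?thesis using below_rep_col[of s y] assms(1) by (simp add: entry_step step_inner)
  qed (use old in \<open>auto simp: entry_step\<close>)
qed

lemma new_pair_above_reached:
  assumes s: "[s = s0 + 1] (mod int k)" and "st_inner \<sigma>' s < y" "reached \<sigma>' s y"
  shows "entry \<sigma>' s y \<le> bumped"
proof (cases "[s = s0] (mod int k)")
  case True
  then have "y \<le> event_col s" using assms(3) reached_lt_rep_col by (force simp: reached_step)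
  then show ?thesis using entry_step_le True assms(2) y_bump(3) by (force simp: step_inner)
next
  case False
  have s1: "[s - 1 = s0] (mod int k)" using s by (metis add_diff_cancel_right' cong_diff cong_refl)
  have "entry \<sigma> ((s - 1) + 1) y \<le> entry \<sigma> (s - 1) (event_col (s - 1))"
    using reached_below_unreached[of "s - 1" y "event_col (s - 1)"] rep_col_unreached[OF s1]
      rep_col_le_outer[OF s1] assms(2,3) False by (simp add: step_inner reached_step)
  then show ?thesis using entry_rep_col[OF s1] False by (simp add: entry_step)
qed

lemma queue_above_reached_step: "a \<in> set (queued \<sigma>') \<Longrightarrow> [s = fst (snd a)] (mod int k) \<Longrightarrow>
    st_inner \<sigma>' s < y \<Longrightarrow> reached \<sigma>' s y \<Longrightarrow> entry \<sigma>' s y \<le> fst a"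
  using queue_above_reached_old[of a s y] new_pair_above_reached[of s y]
  by (auto simp: queued_step new_pair_def)

lemma queue_sorted_step:
  "sorted_wrt (\<lambda>a b. [fst (snd a) = fst (snd b)] (mod int k) \<longrightarrow> fst a \<le> fst b) (queued \<sigma>')"
proof -
  have "fst b \<le> bumped" if "b \<in> set (q1 @ st_q' \<sigma>)" "[fst (snd b) = s0 + 1] (mod int k)" for b
  proof -
    have "[s0 = fst (snd b) - 1] (mod int k)"
      using that(2) cong_sym by (metis add_diff_cancel_right' cong_diff cong_refl)
    then show ?thesis using queue_below_unreached[of b s0 y_bump] that(1) y_bump_unreached y_bump(2)
      by (simp add: queued_old entry_def bumped_def)
  qed
  then show ?thesis using queue_sorted
    by (simp add: queued_step queued_old sorted_wrt_append new_pair_def)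
qed

lemma queue_below_unreached_step:
  assumes "a \<in> set (queued \<sigma>')" "[s = fst (snd a) - 1] (mod int k)"
    and "\<not> reached \<sigma>' s y'" "y' \<le> st_outer \<sigma>' s"
  shows "fst a \<le> entry \<sigma>' s y'"
proof (cases "a = new_pair")
  case True
  then have s: "[s = s0] (mod int k)" using assms(2) by (simp add: new_pair_def)
  have "entry \<sigma> s (event_col s) \<le> entry \<sigma> s y'"
    using mono_on_int_interval[of "st_inner \<sigma> s" "st_outer \<sigma> s" "entry \<sigma> s"] rows_sorted
      inner_lt_rep_col[OF s] unreached_step[OF assms(3)] assms(4) s
    by (simp add: outer_step less_imp_le)
  then show ?thesis using True entry_rep_col[OF s] unreached_step[OF assms(3)]
    by (simp add: new_pair_def)
next
  case False
  then show ?thesis using queue_below_unreached_old assms by (simp add: queued_step)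
qed

lemma keys_sorted_step:
  "sorted_wrt (<) (map log_key (st_log \<sigma>') @ map todo_key (st_todo \<sigma>') @ map queue_key (queued \<sigma>'))"
proof -
  let ?old = "map log_key (st_log \<sigma>) @ map todo_key (st_todo \<sigma>) @ map queue_key (queued \<sigma>)"
  obtain R where R: "\<forall>a\<in>set (st_q \<sigma>). fst (queue_key a) = R"
    "\<forall>b\<in>set (st_q' \<sigma>). fst (queue_key b) = R + 1"
    using queue_levels by blast
  have head: "queue_key (x, s0, t) = (R, t)" using R(1) queue_head by (simp add: queue_key_def)
  have new: "queue_key new_pair = (R + 1, t)" using head by (simp add: queue_key_def new_pair_def)
  have log_below: "z < (R, t)" if "z \<in> log_key ` set (st_log \<sigma>)" for z
    using keys_sorted that head by (auto simp: queued_old todo_empty sorted_wrt_append)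
  have "z < (R + 1, t)" if z: "z \<in> set ?old" for z
  proof -
    consider "z \<in> log_key ` set (st_log \<sigma>)" | "z = (R, t)" | b where "b \<in> set q1" "z = queue_key b"
      | b where "b \<in> set (st_q' \<sigma>)" "z = queue_key b"
      using z head by (auto simp: queued_old todo_empty)
    then show ?thesis
    proof cases
      case 1
      then show ?thesis using log_below[of z] by (cases z) auto
    next
      case 3
      then have "fst z = R" using R(1) queue_head by simp
      then show ?thesis by (cases z) simp
    next
      case 4
      then have "(R, snd z) \<in> log_key ` set (st_log \<sigma>)"
        using queue_from_log[of b] R(2) by (simp add: queued_old)
      then have "(R, snd z) < (R, t)" by (rule log_below)
      moreover have "fst z = R + 1" using 4 R(2) by simp
      ultimately show ?thesis by (cases z) simp
    qed simp
  qed
  then have "sorted_wrt (<) (?old @ [queue_key new_pair])" using keys_sorted new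
    by (simp add: sorted_wrt_append)
  moreover have "map log_key (st_log \<sigma>') @ map todo_key (st_todo \<sigma>') @ map queue_key (queued \<sigma>') =
      ?old @ [queue_key new_pair]"
    using keys_step by (simp add: queued_step step_todo)
  ultimately show ?thesis by simp
qed

lemma queue_levels_step: "\<exists>R. (\<forall>a\<in>set (st_q \<sigma>'). fst (queue_key a) = R) \<and>
    (\<forall>b\<in>set (st_q' \<sigma>'). fst (queue_key b) = R + 1) \<and> (st_todo \<sigma>' \<noteq> [] \<longrightarrow> R = 1)"
proof -
  obtain R where R: "\<forall>a\<in>set (st_q \<sigma>). fst (queue_key a) = R"
    "\<forall>b\<in>set (st_q' \<sigma>). fst (queue_key b) = R + 1"
    using queue_levels by blast
  then have "fst (queue_key new_pair) = R + 1"
    using queue_head by (simp add: queue_key_def new_pair_def)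
  then show ?thesis using R queue_head by (intro exI[of _ R]) (simp add: step_eq todo_empty)
qed

lemma queue_from_log_step:
  "a \<in> set (queued \<sigma>') \<Longrightarrow> (fst (queue_key a) - 1, snd (queue_key a)) \<in> log_key ` set (st_log \<sigma>')"
  using queue_from_log_old[of a]
  by (auto simp: queued_step step_log queue_key_def new_pair_def log_key_def)

lemma fm_invariant_step: "fm_invariant n k r0 \<sigma>'"
  by unfold_locales (fact k_pos inner_periodic_step outer_periodic_step reached_in_outer_step
      rows_sorted_step queue_above_reached_step queue_sorted_step reached_below_unreached_step
      queue_below_unreached_step keys_sorted_step todo_unreached_step removal_phase_step
      queue_levels_step queue_from_log_step log_moves_right_step log_tags_in_window_step)+

end

context fm_invariant
begin

lemma fm_invariant_next_round:
  assumes "st_todo \<sigma> = []" "st_q \<sigma> = []"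
  shows "fm_invariant n k r0 (fm_step n k \<sigma>)"
proof -
  define \<sigma>' where "\<sigma>' = \<sigma>\<lparr>st_q := st_q' \<sigma>, st_q' := []\<rparr>"
  have step: "fm_step n k \<sigma> = \<sigma>'" using assms by (simp add: fm_step_def \<sigma>'_def)
  have same: "queued \<sigma>' = queued \<sigma>" "entry \<sigma>' = entry \<sigma>" "reached \<sigma>' = reached \<sigma>"
    "st_inner \<sigma>' = st_inner \<sigma>" "st_outer \<sigma>' = st_outer \<sigma>" "st_log \<sigma>' = st_log \<sigma>"
    "st_todo \<sigma>' = st_todo \<sigma>"
    using assms by (simp_all add: \<sigma>'_def fun_eq_iff entry_def reached_def)
  obtain R where "\<forall>b\<in>set (st_q' \<sigma>). fst (queue_key b) = R + 1" using queue_levels by blast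
  then have levels: "\<exists>R. (\<forall>a\<in>set (st_q \<sigma>'). fst (queue_key a) = R) \<and>
      (\<forall>b\<in>set (st_q' \<sigma>'). fst (queue_key b) = R + 1) \<and> (st_todo \<sigma>' \<noteq> [] \<longrightarrow> R = 1)"
    using assms by (intro exI[of _ "R + 1"]) (simp add: \<sigma>'_def)
  have removal: "st_todo \<sigma>' \<noteq> [] \<Longrightarrow> st_q' \<sigma>' = [] \<and> (\<forall>s y. reached \<sigma>' s y \<longrightarrow> y \<le> st_inner \<sigma>' s)"
    using assms by (simp add: \<sigma>'_def)
  show ?thesis unfolding step
    by unfold_locales (fact k_pos levels removal | (simp only: same, fact inner_periodic
      outer_periodic reached_in_outer rows_sorted queue_above_reached queue_sorted
      reached_below_unreached queue_below_unreached keys_sorted todo_unreached queue_from_log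
      log_moves_right log_tags_in_window))+
qed

lemma fm_invariant_fm_step: "fm_invariant n k r0 (fm_step n k \<sigma>)"
proof (cases "st_todo \<sigma>")
  case (Cons p rest)
  show ?thesis
  proof (cases "snd p \<le> st_outer \<sigma> (fst p)")
    case True
    interpret removal_occupied n k r0 \<sigma> p rest by unfold_locales (fact Cons True)+
    show ?thesis by (rule fm_invariant_step)
  next
    case False
    interpret removal_vacant n k r0 \<sigma> p rest by unfold_locales (use Cons False in simp_all)
    show ?thesis by (rule fm_invariant_step)
  qed
next
  case Nil
  show ?thesis
  proof (cases "st_q \<sigma>")
    case Nil2: Nil
    show ?thesis using fm_invariant_next_round Nil Nil2 by blast
  next
    case (Cons a q1)
    obtain x s0 t where a: "a = (x, s0, t)" by (cases a) auto
    show ?thesis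
    proof (cases "\<forall>y. st_inner \<sigma> s0 < y \<and> y \<le> st_outer \<sigma> s0 \<longrightarrow> st_ent \<sigma> (proj n k (s0, y)) \<le> x")
      case True
      interpret placement n k r0 \<sigma> x s0 t q1 by unfold_locales (use Nil Cons a True in simp_all)
      show ?thesis by (rule fm_invariant_step)
    next
      case False
      interpret bumping n k r0 \<sigma> x s0 t q1 by unfold_locales (use Nil Cons a False in simp_all)
      show ?thesis by (rule fm_invariant_step)
    qed
  qed
qed

end

lemma (in full_multi) fm_invariant_fm_run:
  fixes T :: "box \<Rightarrow> 'a::linorder"
  assumes "ssyt n k lam mu T" and "multi_input n k mu S"
  shows "fm_invariant n k r0 (fm_run n k lam mu T S r0 i)"
proof (induction i)
  case 0
  then show ?case using fm_invariant_init[OF assms] by (simp add: fm_run_def)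
next
  case (Suc i)
  then show ?case using fm_invariant.fm_invariant_fm_step by (fastforce simp: fm_run_def)
qed

section \<open>Bumping routes\<close>

lemma (in cylinder) route_memE:
  assumes "(p, t) \<in> set (route n k L P)"
  obtains j q where "t < length L" "L ! t = ((fst P + j * int k, snd P - j * col_shift), q)"
    "p = (fst q - j * int k, snd q + j * col_shift)"
proof -
  obtain t' tag q where m: "(t', tag, q) \<in> set (zip [0..<length L] L)" "proj n k tag = proj n k P"
    "(p, t) = ((fst q + fst P - fst tag, snd q + snd P - snd tag), t')"
    using assms unfolding route_def by auto
  then have t: "t < length L" "L ! t = (tag, q)" "proj n k tag = proj n k P"
    and p: "p = (fst q + fst P - fst tag, snd q + snd P - snd tag)"
    by (auto simp: set_zip)
  define j where "j = (fst tag - fst P) div int k"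
  have "P \<in> proj n k tag" using t(3) in_proj_self by metis
  then have "[fst P = fst tag] (mod int k)" "snd P = rep_col (fst P) tag"
    using mem_proj_iff[of "fst P" "snd P" tag] by simp_all
  then have "tag = (fst P + j * int k, snd P - j * col_shift)"
    using cong_eq_add_div by (auto simp: j_def rep_col_def prod_eq_iff)
  then show ?thesis using t p by (intro that[of j q]) (simp_all add: algebra_simps)
qed

context fm_invariant
begin

lemma log_key_order:
  assumes "i < length (st_log \<sigma>)" "j < length (st_log \<sigma>)"
    and "log_key (st_log \<sigma> ! i) < log_key (st_log \<sigma> ! j)"
  shows "i < j"
proof (rule ccontr)
  assume "\<not> i < j"
  moreover have "sorted_wrt (<) (map log_key (st_log \<sigma>))"
    using keys_sorted by (simp add: sorted_wrt_append)
  ultimately have "log_key (st_log \<sigma> ! j) \<le> log_key (st_log \<sigma> ! i)"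
    using assms(1) by (cases "i = j") (auto simp: sorted_wrt_iff_nth_less less_imp_le)
  then show False using assms(3) by simp
qed

lemma later_event_right:
  assumes "i < j" "j < length (st_log \<sigma>)" "st_log \<sigma> ! i = (a, q)" "st_log \<sigma> ! j = (b, q')"
    and "[fst q = fst q'] (mod int k)"
  shows "rep_col (fst q') q < snd q'"
  using log_moves_right assms unfolding sorted_wrt_iff_nth_less by fastforce

lemma routes_ordered:
  assumes PQ: "pt_less P Q"
    and G: "(pG, tG) \<in> set (route n k (st_log \<sigma>) P)" "fst pG = r"
    and H: "(pH, tH) \<in> set (route n k (st_log \<sigma>) Q)" "fst pH = r"
  shows "snd pH < snd pG \<and> tH < tG"
proof -
  let ?L = "st_log \<sigma>"
  obtain jG qG where g: "tG < length ?L" "?L ! tG = ((fst P + jG * int k, snd P - jG * col_shift), qG)"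
    "pG = (fst qG - jG * int k, snd qG + jG * col_shift)" using route_memE[OF G(1)] by blast
  obtain jH qH where h: "tH < length ?L" "?L ! tH = ((fst Q + jH * int k, snd Q - jH * col_shift), qH)"
    "pH = (fst qH - jH * int k, snd qH + jH * col_shift)" using route_memE[OF H(1)] by blast
  have "log_key (?L ! tH) < log_key (?L ! tG)"
  proof (cases "fst P < fst Q")
    case True
    then show ?thesis using g h G(2) H(2) by (simp add: log_key_def)
  next
    case False
    then have PQ: "fst P = fst Q" "snd Q < snd P" using PQ by (auto simp: pt_less_def prod_eq_iff)
    have "in_window (fst P + jG * int k, snd P - jG * col_shift)"
      "in_window (fst Q + jH * int k, snd Q - jH * col_shift)"
      using log_tags_in_window[OF nth_mem[OF g(1)]] log_tags_in_window[OF nth_mem[OF h(1)]] g(2) h(2)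
      by simp_all
    then have "jG * int k = jH * int k"
      using in_window_cong_eq PQ(1) cong_add_mult cong_sym cong_trans
      by (smt (verit, ccfv_threshold) fst_conv)
    then have "jG = jH" using k_pos by simp
    then show ?thesis using g h G(2) H(2) PQ by (simp add: log_key_def)
  qed
  then have "tH < tG" by (rule log_key_order[OF h(1) g(1)])
  moreover have "[fst qH = fst qG] (mod int k)" "fst qH - fst qG = (jH - jG) * int k"
    using g(3) h(3) G(2) H(2) cong_add_mult[of "fst qH" "jG - jH"] by (auto simp: algebra_simps)
  ultimately have "rep_col (fst qG) qH < snd qG" "(fst qH - fst qG) div int k = jH - jG"
    using later_event_right g(1,2) h(2) k_pos by auto
  then have "snd pH < snd pG" using g(3) h(3) by (simp add: rep_col_def algebra_simps)
  then show ?thesis using \<open>tH < tG\<close> by simp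
qed

end

theorem mainTheorem12:
  fixes n k :: nat and lam mu :: "int \<Rightarrow> int" and T :: "box \<Rightarrow> 'a::linorder"
    and S :: "box set" and r0 :: int and i :: nat and P Q :: pt and r :: int
    and pG pH :: pt and tG tH :: nat
  assumes "1 \<le> k" and "k < n"
    and "ssyt n k lam mu T"
    and "multi_input n k mu S"
    and "proj n k P \<in> S" and "proj n k Q \<in> S"
    and "pt_less P Q"
    and "(pG, tG) \<in> set (route n k (st_log (fm_run n k lam mu T S r0 i)) P)" and "fst pG = r"
    and "(pH, tH) \<in> set (route n k (st_log (fm_run n k lam mu T S r0 i)) Q)" and "fst pH = r"
  shows "snd pH < snd pG \<and> tH < tG"
proof -
  interpret full_multi n k r0 using assms(1) by unfold_locales simp
  interpret fm_invariant n k r0 "fm_run n k lam mu T S r0 i"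
    using fm_invariant_fm_run assms(3,4) by blast
  show ?thesis using routes_ordered assms(7-11) by blast
qed

end
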